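(* Let $\alpha$ be a nonzero real number and let $\gamma$ be a closed $\alpha$-stationary curve in $\mathbb S^2$ not passing through $N$. (1) If $\gamma$ is contained in the open upper hemisphere $\mathbb S^2_+=\mathbb S^2\cap\{z>0\}$, then $\alpha<0$. (2) If $\gamma$ is contained in the open lower hemisphere $\mathbb S^2_-=\mathbb S^2\cap\{z<0\}$, then $\alpha>0$.
   Context: $\mathbb S^2\subset\mathbb R^3$ is the unit sphere with the Euclidean inner product $\langle,\rangle$. It is parametrized by $\Psi(u,v)=(\sin u\cos v,\sin u\sin v,\cos u)$, and $N=(0,0,1)$. The spherical distance from $\Psi(u,v)$ to $N$ is $u\in[0,\pi]$. For a curve $\gamma(t)=\Psi(u(t),v(t))$, the energy is $$E_\alpha[\gamma]=\int_\gamma\mathsf d^\alpha ds=\int u^\alpha\sqrt{u'^2+\sin^2(u)v'^2}\,dt,$$ where $\mathsf d$ is the distance to $N$. The curve is $\alpha$-stationary if it is a critical point of $E_\alpha$ (Euler–Lagrange equations). Equivalently, its curvature satisfies $\kappa=\alpha\langle\mathbf n,\xi\rangle/\mathsf d$. Here $\mathbf n=(\gamma'\times\gamma)/|\gamma'|$, $\kappa=\langle\gamma'',\mathbf n\rangle/|\gamma'|^2$, and $\xi=\Psi_u$ is the unit tangent of the minimizing geodesic from $N$. Throughout the paper, $\alpha\ne0$ and curves avoid $N$. *)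

theory Defs
  imports "HOL-Analysis.Analysis"
begin

definition NP :: "real^3" where "NP = vector [0, 0, 1]"

text \<open>Spherical distance to N: for p = Psi(u,v) on the sphere, u = arccos (p_3).\<close>
definition sdist :: "real^3 \<Rightarrow> real" where "sdist p = arccos (p $ 3)"

text \<open>xi = Psi_u, unit tangent at p of the minimizing geodesic from N.
  For p = Psi(u,v) with 0 < u < pi one has Psi_u = (p_3 p - N) / sin u and sin u = sqrt(1 - p_3^2).\<close>
definition xi :: "real^3 \<Rightarrow> real^3" where
  "xi p = (1 / sqrt (1 - (p $ 3)^2)) *\<^sub>R ((p $ 3) *\<^sub>R p - NP)"

definition closed_sphere_curve ::
  "(real \<Rightarrow> real^3) \<Rightarrow> (real \<Rightarrow> real^3) \<Rightarrow> (real \<Rightarrow> real^3) \<Rightarrow> real \<Rightarrow> bool" where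
  "closed_sphere_curve g g' g'' L \<longleftrightarrow>
     L > 0 \<and> (\<forall>t. g (t + L) = g t) \<and>
     (\<forall>t. (g has_vector_derivative g' t) (at t)) \<and>
     (\<forall>t. (g' has_vector_derivative g'' t) (at t)) \<and>
     continuous_on UNIV g'' \<and>
     (\<forall>t. g' t \<noteq> 0) \<and>
     (\<forall>t. norm (g t) = 1) \<and> (\<forall>t. g t \<noteq> NP)"

definition unit_normal :: "real^3 \<Rightarrow> real^3 \<Rightarrow> real^3" where
  "unit_normal p v = (1 / norm v) *\<^sub>R cross3 v p"

definition curvature :: "real^3 \<Rightarrow> real^3 \<Rightarrow> real^3 \<Rightarrow> real" where
  "curvature p v a = inner a (unit_normal p v) / (norm v)^2"

text \<open>alpha-stationary: kappa = alpha <n, xi> / d at every point of the curve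
  (where xi is defined, i.e. off the south pole -N).\<close>
definition alpha_stationary ::
  "real \<Rightarrow> (real \<Rightarrow> real^3) \<Rightarrow> (real \<Rightarrow> real^3) \<Rightarrow> (real \<Rightarrow> real^3) \<Rightarrow> bool" where
  "alpha_stationary \<alpha> g g' g'' \<longleftrightarrow>
     (\<forall>t. g t \<noteq> - NP \<longrightarrow>
        curvature (g t) (g' t) (g'' t) =
          \<alpha> * inner (unit_normal (g t) (g' t)) (xi (g t)) / sdist (g t))"

end

theory Submission
  imports Defs
begin

text \<open>Follow the height z = \<gamma> $ 3 along the closed curve. At a critical point of z away from
  the poles the velocity v is horizontal, and expanding the acceleration in the orthogonal frame
  \<gamma>, v, v \<times> \<gamma> turns the stationarity equation into z'' = |v|^2 (- z - \<alpha> sin d / d), where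
  d = arccos z is the distance to N, so that sin d / d > 0. If \<gamma> lies in the upper hemisphere,
  look at a minimum of z: there z'' \<ge> 0 and z > 0, which forces \<alpha> < 0. In the lower hemisphere
  look at a maximum of z: there z'' \<le> 0 and z < 0, which forces \<alpha> > 0.\<close>

lemma has_real_derivative_vec_nth:
  assumes "(g has_vector_derivative v) (at t)"
  shows "((\<lambda>s. g s $ i) has_real_derivative v $ i) (at t)"
  using bounded_linear.has_vector_derivative[OF bounded_linear_vec_nth assms]
  by (simp add: has_real_derivative_iff_has_vector_derivative)

lemma derivative_of_constant_inner:
  fixes f g :: "real \<Rightarrow> 'a::real_inner"
  assumes "(f has_vector_derivative f') (at t)" "(g has_vector_derivative g') (at t)"
    and "\<And>s. inner (f s) (g s) = c"
  shows "inner (f t) g' + inner f' (g t) = 0"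
proof -
  have "((\<lambda>s. inner (f s) (g s)) has_derivative (\<lambda>h. inner (f t) (h *\<^sub>R g') + inner (h *\<^sub>R f') (g t))) (at t)"
    using has_derivative_inner[OF assms(1,2)[unfolded has_vector_derivative_def]] .
  moreover have "(\<lambda>h. inner (f t) (h *\<^sub>R g') + inner (h *\<^sub>R f') (g t)) = (*) (inner (f t) g' + inner f' (g t))"
    by (simp add: fun_eq_iff algebra_simps)
  ultimately have "((\<lambda>s. inner (f s) (g s)) has_real_derivative inner (f t) g' + inner f' (g t)) (at t)"
    by (simp add: has_field_derivative_def)
  moreover have "((\<lambda>s. inner (f s) (g s)) has_real_derivative 0) (at t)"
    using assms(3) by simp
  ultimately show ?thesis
    by (rule DERIV_unique)
qed

lemma sphere_curve_inner_velocity: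
  fixes g :: "real \<Rightarrow> 'a::real_inner"
  assumes "\<And>s. (g has_vector_derivative g' s) (at s)" and "\<And>s. norm (g s) = 1"
  shows "inner (g t) (g' t) = 0"
  using derivative_of_constant_inner[where c = 1, OF assms(1)[of t] assms(1)[of t]] assms(2)
  by (simp add: norm_eq_1 inner_commute)

lemma sphere_curve_inner_acceleration:
  fixes g :: "real \<Rightarrow> 'a::real_inner"
  assumes "\<And>s. (g has_vector_derivative g' s) (at s)" and "\<And>s. (g' has_vector_derivative g'' s) (at s)"
    and "\<And>s. norm (g s) = 1"
  shows "inner (g t) (g'' t) = - (norm (g' t))\<^sup>2"
  using derivative_of_constant_inner[where c = 0, OF assms(1)[of t] assms(2)[of t]]
    sphere_curve_inner_velocity[OF assms(1,3)]
  by (simp add: power2_norm_eq_inner eq_neg_iff_add_eq_0)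

lemma DERIV_global_max_second_derivative:
  fixes f f' f'' :: "real \<Rightarrow> real"
  assumes f': "\<And>t. (f has_real_derivative f' t) (at t)"
    and f'': "(f' has_real_derivative f'' t0) (at t0)"
    and max: "\<And>t. f t \<le> f t0"
  shows "f' t0 = 0" and "f'' t0 \<le> 0"
proof -
  show crit: "f' t0 = 0"
    using DERIV_local_max[OF f'[of t0], of 1] max by auto
  show "f'' t0 \<le> 0"
  proof (rule ccontr)
    assume "\<not> f'' t0 \<le> 0"
    then obtain d where "d > 0" and incr: "\<And>h. 0 < h \<Longrightarrow> h < d \<Longrightarrow> f' t0 < f' (t0 + h)"
      using DERIV_pos_inc_right[OF f''] by force
    obtain c where c: "t0 < c" "c < t0 + d/2" and mvt: "f (t0 + d/2) - f t0 = d/2 * f' c"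
      using MVT2[of t0 "t0 + d/2" f f'] f' \<open>d > 0\<close> by auto
    have "0 < f' c"
      using incr[of "c - t0"] c crit by auto
    then have "0 < d/2 * f' c"
      using \<open>d > 0\<close> by simp
    then show False
      using mvt max[of "t0 + d/2"] by linarith
  qed
qed

lemma periodic_add_of_int_mult:
  assumes "\<And>t. g (t + L) = g t"
  shows "g (s + of_int k * L) = g s"
proof (induction k rule: int_induct[where k = 0])
  case (step1 i)
  then show ?case
    using assms[of "s + of_int i * L"] by (simp add: algebra_simps)
next
  case (step2 i)
  then show ?case
    using assms[of "s + of_int (i - 1) * L"] by (simp add: algebra_simps)
qed simp

lemma continuous_periodic_attains_sup:
  fixes f :: "real \<Rightarrow> 'a::linorder_topology"
  assumes "L > 0" and per: "\<And>t. f (t + L) = f t" and "continuous_on UNIV f"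
  obtains t0 where "\<And>t. f t \<le> f t0"
proof -
  obtain t0 where t0: "\<forall>s \<in> {0..L}. f s \<le> f t0"
    using continuous_attains_sup[OF compact_Icc _ continuous_on_subset[OF assms(3)], of 0 L] \<open>L > 0\<close>
    by auto
  have "f t \<le> f t0" for t
  proof -
    have "t = frac (t / L) * L + of_int \<lfloor>t / L\<rfloor> * L"
      using \<open>L > 0\<close> by (simp add: frac_def algebra_simps)
    then have "f t = f (frac (t / L) * L)"
      using periodic_add_of_int_mult[where g = f, OF per] by metis
    moreover have "frac (t / L) * L \<in> {0..L}"
      using \<open>L > 0\<close> frac_ge_0[of "t / L"] frac_lt_1[of "t / L"] by simp
    ultimately show ?thesis
      using t0 by simp
  qed
  then show ?thesis
    using that by blast
qed

lemma periodic_C2_attains_max: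
  fixes f f' f'' :: "real \<Rightarrow> real"
  assumes "L > 0" and "\<And>t. f (t + L) = f t"
    and f': "\<And>t. (f has_real_derivative f' t) (at t)"
    and f'': "\<And>t. (f' has_real_derivative f'' t) (at t)"
  obtains t0 where "\<And>t. f t \<le> f t0" and "f' t0 = 0" and "f'' t0 \<le> 0"
proof -
  have "continuous_on UNIV f"
    using f' DERIV_isCont continuous_at_imp_continuous_on by blast
  then obtain t0 where max: "\<And>t. f t \<le> f t0"
    using continuous_periodic_attains_sup[where f = f, OF assms(1,2)] by blast
  moreover have "f' t0 = 0" and "f'' t0 \<le> 0"
    using DERIV_global_max_second_derivative[where f = f and f' = f' and f'' = f'', OF f' f'' max] by blast+
  ultimately show ?thesis
    by (rule that)
qed

lemma periodic_C2_attains_min: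
  fixes f f' f'' :: "real \<Rightarrow> real"
  assumes "L > 0" and "\<And>t. f (t + L) = f t"
    and "\<And>t. (f has_real_derivative f' t) (at t)"
    and "\<And>t. (f' has_real_derivative f'' t) (at t)"
  obtains t0 where "\<And>t. f t0 \<le> f t" and "f' t0 = 0" and "0 \<le> f'' t0"
proof (rule periodic_C2_attains_max[where f = "\<lambda>t. - f t" and f' = "\<lambda>t. - f' t" and f'' = "\<lambda>t. - f'' t"])
  fix t0
  assume max: "\<And>t. - f t \<le> - f t0" and "- f' t0 = 0" and "- f'' t0 \<le> 0"
  show thesis
  proof (rule that)
    show "f t0 \<le> f t" for t
      using max[of t] by simp
  qed (use \<open>- f' t0 = 0\<close> \<open>- f'' t0 \<le> 0\<close> in auto)
qed (use assms in \<open>auto intro: DERIV_minus\<close>)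

lemma sdist_pos:
  assumes "-1 \<le> p $ 3" and "p $ 3 < 1"
  shows "0 < sdist p"
  using arccos_less_arccos[of "p $ 3" 1] assms by (simp add: sdist_def)

lemma sphere_height_less_1:
  fixes p :: "real^3"
  assumes "norm p = 1" and "p \<noteq> NP"
  shows "p $ 3 < 1"
proof -
  have sum_sq: "(p $ 1)\<^sup>2 + (p $ 2)\<^sup>2 + (p $ 3)\<^sup>2 = 1"
    using assms(1) by (simp add: norm_eq_1 inner_vec_def sum_3 power2_eq_square)
  have "p $ 3 \<le> 1"
    using component_le_norm_cart[of p 3] assms(1) by simp
  moreover have "p $ 3 \<noteq> 1"
  proof
    assume "p $ 3 = 1"
    then have "p $ 1 = 0 \<and> p $ 2 = 0"
      using sum_sq by (simp add: sum_power2_eq_zero_iff)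
    then have "p = NP"
      using \<open>p $ 3 = 1\<close> by (simp add: NP_def vec_eq_iff forall_3)
    with assms(2) show False ..
  qed
  ultimately show ?thesis
    by simp
qed

lemma sphere_height_greater_minus_1:
  fixes p :: "real^3"
  assumes "norm p = 1" and "p \<noteq> - NP"
  shows "-1 < p $ 3"
  using sphere_height_less_1[of "- p"] assms by (auto simp: minus_equation_iff)

text \<open>The frame p, v, v \<times> p is orthogonal, with |v \<times> p| = |v| since p is a unit vector
  orthogonal to v; this explains the coefficients.\<close>

lemma cross3_orthogonal_frame_expansion:
  fixes p v x :: "real^3"
  assumes "norm p = 1" and "inner p v = 0"
  shows "(norm v)\<^sup>2 *\<^sub>R x =
    ((norm v)\<^sup>2 * inner x p) *\<^sub>R p + inner x v *\<^sub>R v + inner x (cross3 v p) *\<^sub>R cross3 v p"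
  using assms unfolding norm_eq_1 power2_norm_eq_inner
  by (simp add: cross3_simps forall_3) (intro conjI; algebra)

lemma inner_unit_normal_xi:
  "inner (unit_normal p v) (xi p) = - cross3 v p $ 3 / (norm v * sqrt (1 - (p $ 3)\<^sup>2))"
proof -
  have "inner (cross3 v p) NP = cross3 v p $ 3"
    by (simp add: NP_def inner_vec_def sum_3)
  then have "inner (cross3 v p) ((p $ 3) *\<^sub>R p - NP) = - cross3 v p $ 3"
    by (simp add: inner_diff_right dot_cross_self)
  then show ?thesis
    by (simp add: unit_normal_def xi_def)
qed

lemma curvature_eq_inner_cross3:
  "curvature p v a = inner a (cross3 v p) / norm v ^ 3"
  by (simp add: curvature_def unit_normal_def power2_eq_square power3_eq_cube)

lemma stationary_height_acceleration:
  fixes p v a :: "real^3"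
  assumes p: "norm p = 1" "-1 < p $ 3" "p $ 3 < 1"
    and v: "inner p v = 0" "v $ 3 = 0" "v \<noteq> 0"
    and a: "inner p a = - (norm v)\<^sup>2"
    and stationary: "curvature p v a = \<alpha> * inner (unit_normal p v) (xi p) / sdist p"
  shows "a $ 3 = (norm v)\<^sup>2 * (- p $ 3 - \<alpha> * sqrt (1 - (p $ 3)\<^sup>2) / sdist p)"
proof -
  define n w s d where "n = norm v" and "w = cross3 v p $ 3"
    and "s = sqrt (1 - (p $ 3)\<^sup>2)" and "d = sdist p"
  have "n > 0"
    using v(3) by (simp add: n_def)
  have "(p $ 3)\<^sup>2 < 1"
    using p(2,3) by (simp add: abs_square_less_1)
  then have "s > 0" and s_sq: "s\<^sup>2 = 1 - (p $ 3)\<^sup>2"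
    by (simp_all add: s_def)
  have "d > 0"
    using p(2,3) sdist_pos by (simp add: d_def)
  have frame: "n\<^sup>2 *\<^sub>R x =
      (n\<^sup>2 * inner x p) *\<^sub>R p + inner x v *\<^sub>R v + inner x (cross3 v p) *\<^sub>R cross3 v p" for x
    using cross3_orthogonal_frame_expansion[OF p(1) v(1)] by (simp add: n_def)
  have N_expansion: "n\<^sup>2 = n\<^sup>2 * (p $ 3)\<^sup>2 + w\<^sup>2"
    using arg_cong[OF frame[of NP], of "\<lambda>x. x $ 3"] v(2)
    by (simp add: w_def NP_def inner_vec_def sum_3 cross3_def power2_eq_square)
  have a_expansion: "n\<^sup>2 * a $ 3 = - n\<^sup>2 * n\<^sup>2 * p $ 3 + inner a (cross3 v p) * w"
    using arg_cong[OF frame[of a], of "\<lambda>x. x $ 3"] v(2) a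
    by (simp add: w_def n_def inner_commute)
  have "inner a (cross3 v p) / n ^ 3 = \<alpha> * (- w / (n * s)) / d"
    using stationary by (simp add: curvature_eq_inner_cross3 inner_unit_normal_xi n_def w_def s_def d_def)
  then have "inner a (cross3 v p) = - \<alpha> * n\<^sup>2 * w / (s * d)"
    using \<open>n > 0\<close> \<open>s > 0\<close> \<open>d > 0\<close> by (simp add: field_simps power2_eq_square power3_eq_cube)
  with a_expansion have "n\<^sup>2 * a $ 3 = n\<^sup>2 * (- n\<^sup>2 * p $ 3 - \<alpha> * w\<^sup>2 / (s * d))"
    by (simp add: algebra_simps power2_eq_square)
  also have "w\<^sup>2 = n\<^sup>2 * s\<^sup>2"
    using N_expansion s_sq by algebra
  also have "n\<^sup>2 * (- n\<^sup>2 * p $ 3 - \<alpha> * (n\<^sup>2 * s\<^sup>2) / (s * d)) =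
      n\<^sup>2 * (n\<^sup>2 * (- p $ 3 - \<alpha> * s / d))"
    using \<open>s > 0\<close> by (simp add: field_simps power2_eq_square)
  finally have "n\<^sup>2 * a $ 3 = n\<^sup>2 * (n\<^sup>2 * (- p $ 3 - \<alpha> * s / d))" .
  then have "a $ 3 = n\<^sup>2 * (- p $ 3 - \<alpha> * s / d)"
    using \<open>n > 0\<close> by (metis mult_left_cancel power_not_zero less_irrefl)
  then show ?thesis
    by (simp add: n_def s_def d_def)
qed

lemma closed_sphere_curve_nonconstant:
  assumes "closed_sphere_curve \<gamma> \<gamma>' \<gamma>'' L"
  obtains t where "\<gamma> t \<noteq> p"
proof (rule ccontr)
  assume "\<not> thesis"
  with that have "\<gamma> = (\<lambda>_. p)"
    by blast
  then have "(\<gamma> has_vector_derivative 0) (at 0)"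
    by simp
  moreover have "(\<gamma> has_vector_derivative \<gamma>' 0) (at 0)" and "\<gamma>' 0 \<noteq> 0"
    using assms by (simp_all add: closed_sphere_curve_def)
  ultimately show False
    using vector_derivative_unique_at by blast
qed

lemma closed_sphere_curve_max_height_gt_minus_1:
  assumes curve: "closed_sphere_curve \<gamma> \<gamma>' \<gamma>'' L" and max: "\<And>t. \<gamma> t $ 3 \<le> \<gamma> t0 $ 3"
  shows "-1 < \<gamma> t0 $ 3"
proof -
  obtain t1 where "\<gamma> t1 \<noteq> - NP"
    using closed_sphere_curve_nonconstant[OF curve] by blast
  then show ?thesis
    using sphere_height_greater_minus_1[of "\<gamma> t1"] max[of t1] curve
    by (simp add: closed_sphere_curve_def)
qed

lemma stationary_curve_height_at_critical_point:
  assumes curve: "closed_sphere_curve \<gamma> \<gamma>' \<gamma>'' L"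
    and stationary: "alpha_stationary \<alpha> \<gamma> \<gamma>' \<gamma>''"
    and "\<gamma>' t $ 3 = 0" and "-1 < \<gamma> t $ 3"
  shows "\<gamma>'' t $ 3 =
    (norm (\<gamma>' t))\<^sup>2 * (- \<gamma> t $ 3 - \<alpha> * sqrt (1 - (\<gamma> t $ 3)\<^sup>2) / sdist (\<gamma> t))"
proof -
  have \<gamma>': "\<And>s. (\<gamma> has_vector_derivative \<gamma>' s) (at s)"
    and \<gamma>'': "\<And>s. (\<gamma>' has_vector_derivative \<gamma>'' s) (at s)"
    and sphere: "\<And>s. norm (\<gamma> s) = 1" and "\<gamma>' t \<noteq> 0" and "\<gamma> t \<noteq> NP"
    using curve by (simp_all add: closed_sphere_curve_def)
  have "\<gamma> t \<noteq> - NP"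
    using \<open>-1 < \<gamma> t $ 3\<close> by (auto simp: NP_def)
  then show ?thesis
    using stationary_height_acceleration[OF sphere \<open>-1 < \<gamma> t $ 3\<close>
        sphere_height_less_1[OF sphere \<open>\<gamma> t \<noteq> NP\<close>] sphere_curve_inner_velocity[OF \<gamma>' sphere]
        \<open>\<gamma>' t $ 3 = 0\<close> \<open>\<gamma>' t \<noteq> 0\<close> sphere_curve_inner_acceleration[OF \<gamma>' \<gamma>'' sphere]]
      stationary by (simp add: alpha_stationary_def)
qed

lemma stationary_curve_sign_at_critical_point:
  assumes curve: "closed_sphere_curve \<gamma> \<gamma>' \<gamma>'' L"
    and stationary: "alpha_stationary \<alpha> \<gamma> \<gamma>' \<gamma>''"
    and "\<gamma>' t $ 3 = 0" and "-1 < \<gamma> t $ 3"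
  shows "0 \<le> \<gamma>'' t $ 3 \<Longrightarrow> 0 < \<gamma> t $ 3 \<Longrightarrow> \<alpha> < 0"
    and "\<gamma>'' t $ 3 \<le> 0 \<Longrightarrow> \<gamma> t $ 3 < 0 \<Longrightarrow> 0 < \<alpha>"
proof -
  define z where "z = \<gamma> t $ 3"
  define q where "q = sqrt (1 - z\<^sup>2) / sdist (\<gamma> t)"
  have "z < 1"
    using curve sphere_height_less_1 by (simp add: closed_sphere_curve_def z_def)
  then have "0 < q"
    using \<open>-1 < \<gamma> t $ 3\<close> sdist_pos[of "\<gamma> t"] by (simp add: q_def z_def abs_square_less_1)
  have "0 < (norm (\<gamma>' t))\<^sup>2"
    using curve by (simp add: closed_sphere_curve_def)
  moreover have "\<gamma>'' t $ 3 = (norm (\<gamma>' t))\<^sup>2 * (- z - \<alpha> * q)"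
    using stationary_curve_height_at_critical_point[OF assms] by (simp add: z_def q_def)
  ultimately have min: "0 \<le> \<gamma>'' t $ 3 \<longleftrightarrow> \<alpha> * q \<le> - z"
    and max: "\<gamma>'' t $ 3 \<le> 0 \<longleftrightarrow> - z \<le> \<alpha> * q"
    by (simp_all add: zero_le_mult_iff mult_le_0_iff)
  show "\<alpha> < 0" if "0 \<le> \<gamma>'' t $ 3" and "0 < \<gamma> t $ 3"
  proof -
    have "\<alpha> * q < 0"
      using min that by (simp add: z_def)
    with \<open>0 < q\<close> show ?thesis
      by (simp add: mult_less_0_iff)
  qed
  show "0 < \<alpha>" if "\<gamma>'' t $ 3 \<le> 0" and "\<gamma> t $ 3 < 0"
  proof -
    have "0 < \<alpha> * q"
      using max that by (simp add: z_def)
    with \<open>0 < q\<close> show ?thesis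
      by (simp add: zero_less_mult_iff)
  qed
qed

theorem theorem3p4:
  fixes \<alpha> L :: real and \<gamma> \<gamma>' \<gamma>'' :: "real \<Rightarrow> real^3"
  assumes "\<alpha> \<noteq> 0"
    and "closed_sphere_curve \<gamma> \<gamma>' \<gamma>'' L"
    and "alpha_stationary \<alpha> \<gamma> \<gamma>' \<gamma>''"
  shows "((\<forall>t. \<gamma> t $ 3 > 0) \<longrightarrow> \<alpha> < 0) \<and> ((\<forall>t. \<gamma> t $ 3 < 0) \<longrightarrow> \<alpha> > 0)"
proof -
  note sign = stationary_curve_sign_at_critical_point[OF assms(2,3)]
  define z z' z'' where "z = (\<lambda>t. \<gamma> t $ 3)" and "z' = (\<lambda>t. \<gamma>' t $ 3)"
    and "z'' = (\<lambda>t. \<gamma>'' t $ 3)"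
  have "L > 0" and per: "\<And>t. z (t + L) = z t"
    and dz: "\<And>t. (z has_real_derivative z' t) (at t)" and dz': "\<And>t. (z' has_real_derivative z'' t) (at t)"
    using assms(2) by (simp_all add: closed_sphere_curve_def z_def z'_def z''_def has_real_derivative_vec_nth)
  show ?thesis
  proof (intro conjI impI)
    assume "\<forall>t. \<gamma> t $ 3 > 0"
    moreover obtain t0 where "z' t0 = 0" and "0 \<le> z'' t0"
      using periodic_C2_attains_min[OF \<open>L > 0\<close> per dz dz'] by blast
    ultimately show "\<alpha> < 0"
      using sign(1)[of t0] by (simp add: z'_def z''_def)
  next
    assume "\<forall>t. \<gamma> t $ 3 < 0"
    moreover obtain t0 where "\<And>t. z t \<le> z t0" and "z' t0 = 0" and "z'' t0 \<le> 0"
      using periodic_C2_attains_max[OF \<open>L > 0\<close> per dz dz'] by blast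
    moreover have "-1 < \<gamma> t0 $ 3"
      using closed_sphere_curve_max_height_gt_minus_1[OF assms(2)] \<open>\<And>t. z t \<le> z t0\<close> by (simp add: z_def)
    ultimately show "\<alpha> > 0"
      using sign(2)[of t0] by (simp add: z'_def z''_def)
  qed
qed

end
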